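(* Consider the latent-dynamic inference (LDI) procedure described in the context for a latent conditional model with labeling distribution $P(\mathbf{y})=P(\mathbf{y}\mid\mathbf{x},\mathbf{w})$. Suppose that at some step $n\ge 1$ the current labeling $\mathbf{y}'$ satisfies the exact condition $$P(\mathbf{y}')-\Big(1-\sum_{\mathbf{y}_k\in\mathcal{S}_n}P(\mathbf{y}_k)\Big)\geq 0.$$ Then $\mathbf{y}'=\arg\max_{\mathbf{y}}P(\mathbf{y}\mid\mathbf{x},\mathbf{w})$, i.e., $P(\mathbf{y}')\geq P(\mathbf{y})$ for every labeling $\mathbf{y}\in\mathcal{Y}^m$.
   Context: Setting: a latent conditional model with label set $\mathcal{Y}$, disjoint latent variable sets $\mathcal{H}(y)$ ($y\in\mathcal{Y}$), $\mathcal{H}=\bigcup_y\mathcal{H}(y)$, a probability distribution $P(\mathbf{h})=P(\mathbf{h}\mid\mathbf{x},\mathbf{w})$ on latent-labelings $\mathbf{h}\in\mathcal{H}^m$, and $P(\mathbf{y})=\sum_{\mathbf{h}\in\mathcal{H}(y_1)\times\cdots\times\mathcal{H}(y_m)}P(\mathbf{h})$ for labelings $\mathbf{y}\in\mathcal{Y}^m$ (so $\sum_{\mathbf{y}}P(\mathbf{y})=1$). The parent labeling of $\mathbf{h}$ is the unique $\mathbf{y}$ with $h_j\in\mathcal{H}(y_j)$ for all $j$. LDI procedure: initialize $\mathcal{S}_0=\emptyset$ and $\mathbf{y}'$ with $P(\mathbf{y}')=0$. At step $n=1,2,\dots$, let $\mathbf{h}_n$ be the $n$-th ranked latent-labeling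 in decreasing order of $P(\mathbf{h})$ and $\mathbf{y}_n$ its parent labeling. If $\mathbf{y}_n\notin\mathcal{S}_{n-1}$, set $\mathcal{S}_n=\mathcal{S}_{n-1}\cup\{\mathbf{y}_n\}$, compute $P(\mathbf{y}_n)$, and if $P(\mathbf{y}_n)>P(\mathbf{y}')$ replace $\mathbf{y}'$ by $\mathbf{y}_n$; otherwise set $\mathcal{S}_n=\mathcal{S}_{n-1}$. (Thus after step $n$, $\mathbf{y}'$ is a labeling in $\mathcal{S}_n$ of maximal probability among labelings in $\mathcal{S}_n$.) The procedure stops and returns $\mathbf{y}'$ as soon as the exact condition holds. *)

theory Defs
  imports Complex_Main
begin

text \<open>Y is the label set, H y the latent set of label y, m the sequence length.\<close>

definition labelings :: "'y set \<Rightarrow> nat \<Rightarrow> 'y list set" where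
  "labelings Y m = {ys. length ys = m \<and> set ys \<subseteq> Y}"

definition latent_labelings :: "'y set \<Rightarrow> ('y \<Rightarrow> 'h set) \<Rightarrow> nat \<Rightarrow> 'h list set" where
  "latent_labelings Y H m = {hs. length hs = m \<and> set hs \<subseteq> (\<Union>y\<in>Y. H y)}"

definition latent_of :: "('y \<Rightarrow> 'h set) \<Rightarrow> 'h list \<Rightarrow> 'y list \<Rightarrow> bool" where
  "latent_of H hs ys = list_all2 (\<lambda>h y. h \<in> H y) hs ys"

definition label_prob ::
  "'y set \<Rightarrow> ('y \<Rightarrow> 'h set) \<Rightarrow> nat \<Rightarrow> ('h list \<Rightarrow> real) \<Rightarrow> 'y list \<Rightarrow> real" where
  "label_prob Y H m P ys = (\<Sum>hs \<in> {hs \<in> latent_labelings Y H m. latent_of H hs ys}. P hs)"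

definition parent :: "'y set \<Rightarrow> ('y \<Rightarrow> 'h set) \<Rightarrow> nat \<Rightarrow> 'h list \<Rightarrow> 'y list" where
  "parent Y H m hs = (THE ys. ys \<in> labelings Y m \<and> latent_of H hs ys)"

text \<open>State (S_n, y') of the LDI procedure after step n, given the probability of
  labelings Py, the parent map par, the ranking r (r n = n-th ranked latent-labeling,
  n \<ge> 1) and the initial y0 (with P(y0) = 0).\<close>
fun ldi_state :: "('y list \<Rightarrow> real) \<Rightarrow> ('h list \<Rightarrow> 'y list) \<Rightarrow> (nat \<Rightarrow> 'h list)
    \<Rightarrow> 'y list \<Rightarrow> nat \<Rightarrow> 'y list set \<times> 'y list" where
  "ldi_state Py par r y0 0 = ({}, y0)"
| "ldi_state Py par r y0 (Suc k) =
     (let (S, y') = ldi_state Py par r y0 k; yn = par (r (Suc k)) in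
      if yn \<notin> S then (insert yn S, if Py yn > Py y' then yn else y') else (S, y'))"

end

theory Submission
  imports Defs
begin

text \<open>The latent sets are disjoint, so every latent-labeling has exactly one parent labeling and
  the sets of latent-labelings of distinct labelings are disjoint; hence the probabilities of any
  set of distinct labelings add up to at most 1. The labelings outside the visited set \<open>S\<^sub>n\<close>
  therefore carry total mass at most \<open>1 - \<Sum>\<^sub>S P\<close>, which the exact condition bounds by
  \<open>P(y')\<close>, while inside \<open>S\<^sub>n\<close> the current labeling is maximal by construction.\<close>

lemma finite_latent_labelings:
  assumes "finite Y" and "\<And>y. y \<in> Y \<Longrightarrow> finite (H y)"
  shows "finite (latent_labelings Y H m)"
proof -
  have "finite (\<Union>y\<in>Y. H y)" using assms by auto
  then have "finite {hs. set hs \<subseteq> (\<Union>y\<in>Y. H y) \<and> length hs = m}"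
    by (rule finite_lists_length_eq)
  then show ?thesis unfolding latent_labelings_def by (simp add: conj_commute)
qed

lemma latent_of_unique:
  assumes disj: "\<And>y z. y \<in> Y \<Longrightarrow> z \<in> Y \<Longrightarrow> y \<noteq> z \<Longrightarrow> H y \<inter> H z = {}"
    and "ys \<in> labelings Y m" "zs \<in> labelings Y m"
    and "latent_of H hs ys" "latent_of H hs zs"
  shows "ys = zs"
proof (rule nth_equalityI)
  have len: "length hs = length ys" "length hs = length zs"
    using assms(4,5) unfolding latent_of_def by (metis list_all2_lengthD)+
  then show "length ys = length zs" by simp
  fix i assume i: "i < length ys"
  have "hs ! i \<in> H (ys ! i)" "hs ! i \<in> H (zs ! i)"
    using assms(4,5) i len unfolding latent_of_def by (auto simp: list_all2_conv_all_nth)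
  moreover have "ys ! i \<in> Y" "zs ! i \<in> Y"
    using assms(2,3) i len unfolding labelings_def by (auto intro!: subsetD[OF _ nth_mem])
  ultimately show "ys ! i = zs ! i" using disj by blast
qed

lemma latent_of_exists:
  assumes "hs \<in> latent_labelings Y H m"
  shows "\<exists>ys \<in> labelings Y m. latent_of H hs ys"
proof -
  define label where "label = (\<lambda>h. SOME y. y \<in> Y \<and> h \<in> H y)"
  have label: "label h \<in> Y \<and> h \<in> H (label h)" if "h \<in> set hs" for h
  proof -
    from assms that obtain y where "y \<in> Y" "h \<in> H y"
      unfolding latent_labelings_def by auto
    then show ?thesis unfolding label_def by (metis (mono_tags, lifting) someI)
  qed
  have "map label hs \<in> labelings Y m"
    using label assms unfolding labelings_def latent_labelings_def by auto
  moreover have "latent_of H hs (map label hs)"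
    unfolding latent_of_def using label by (auto simp: list_all2_conv_all_nth)
  ultimately show ?thesis by blast
qed

lemma parent_in_labelings:
  assumes "\<And>y z. y \<in> Y \<Longrightarrow> z \<in> Y \<Longrightarrow> y \<noteq> z \<Longrightarrow> H y \<inter> H z = {}"
    and "hs \<in> latent_labelings Y H m"
  shows "parent Y H m hs \<in> labelings Y m"
proof -
  obtain ys where ys: "ys \<in> labelings Y m" "latent_of H hs ys"
    using latent_of_exists[OF assms(2)] by blast
  have "parent Y H m hs = ys" unfolding parent_def
    by (rule the_equality) (use ys latent_of_unique[of Y H, OF assms(1)] in auto)
  with ys show ?thesis by simp
qed

lemma label_prob_nonneg:
  assumes "\<And>hs. hs \<in> latent_labelings Y H m \<Longrightarrow> P hs \<ge> 0"
  shows "label_prob Y H m P ys \<ge> 0"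
  unfolding label_prob_def by (rule sum_nonneg) (use assms in auto)

lemma sum_label_prob_le:
  assumes "finite Y" and "\<And>y. y \<in> Y \<Longrightarrow> finite (H y)"
    and "\<And>y z. y \<in> Y \<Longrightarrow> z \<in> Y \<Longrightarrow> y \<noteq> z \<Longrightarrow> H y \<inter> H z = {}"
    and Pnonneg: "\<And>hs. hs \<in> latent_labelings Y H m \<Longrightarrow> P hs \<ge> 0"
    and T: "finite T" "T \<subseteq> labelings Y m"
  shows "(\<Sum>ys\<in>T. label_prob Y H m P ys) \<le> (\<Sum>hs \<in> latent_labelings Y H m. P hs)"
proof -
  define LL where "LL = latent_labelings Y H m"
  define A where "A ys = {hs \<in> LL. latent_of H hs ys}" for ys
  have finLL: "finite LL" unfolding LL_def using assms(1,2) by (rule finite_latent_labelings)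
  have "(\<Sum>ys\<in>T. label_prob Y H m P ys) = (\<Sum>ys\<in>T. sum P (A ys))"
    by (simp add: label_prob_def A_def LL_def)
  also have "\<dots> = sum P (\<Union>(A ` T))"
  proof (rule sum.UNION_disjoint[symmetric])
    show "finite T" by fact
    show "\<forall>ys\<in>T. finite (A ys)" using finLL unfolding A_def by auto
    show "\<forall>ys\<in>T. \<forall>zs\<in>T. ys \<noteq> zs \<longrightarrow> A ys \<inter> A zs = {}"
    proof (intro ballI impI)
      fix ys zs assume "ys \<in> T" "zs \<in> T" "ys \<noteq> zs"
      with T(2) have "\<not> (latent_of H hs ys \<and> latent_of H hs zs)" for hs
        using latent_of_unique[of Y H, OF assms(3)] by blast
      then show "A ys \<inter> A zs = {}" unfolding A_def by blast
    qed
  qed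
  also have "\<dots> \<le> sum P LL"
    by (rule sum_mono2[OF finLL]) (auto simp: A_def LL_def intro: Pnonneg)
  finally show ?thesis unfolding LL_def .
qed

lemma ldi_state_finite: "finite (fst (ldi_state Py par r y0 k))"
  by (induction k) (auto simp: Let_def split: prod.split)

lemma ldi_state_current:
  "snd (ldi_state Py par r y0 k) = y0 \<or> snd (ldi_state Py par r y0 k) \<in> fst (ldi_state Py par r y0 k)"
  by (induction k) (auto simp: Let_def split: prod.split)

lemma ldi_state_max:
  "z \<in> fst (ldi_state Py par r y0 k) \<Longrightarrow> Py z \<le> Py (snd (ldi_state Py par r y0 k))"
proof (induction k arbitrary: z)
  case (Suc k)
  obtain S y' where "ldi_state Py par r y0 k = (S, y')" by fastforce
  with Suc show ?case by (auto simp: Let_def split: if_splits intro: order.trans[OF _ less_imp_le])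
qed simp

lemma ldi_state_subset:
  assumes "\<And>i. 1 \<le> i \<Longrightarrow> i \<le> k \<Longrightarrow> par (r i) \<in> L"
  shows "fst (ldi_state Py par r y0 k) \<subseteq> L"
  using assms by (induction k) (auto simp: Let_def split: prod.split)

lemma exact_condition_imp_argmax:
  assumes "finite S" and "S \<subseteq> L"
    and current: "y' = y0 \<or> y' \<in> S" and max: "\<And>z. z \<in> S \<Longrightarrow> Py z \<le> Py y'"
    and "Py y0 = 0" and nonneg: "\<And>ys. Py ys \<ge> (0::real)"
    and mass: "\<And>T. finite T \<Longrightarrow> T \<subseteq> L \<Longrightarrow> sum Py T \<le> 1"
    and exact: "Py y' - (1 - sum Py S) \<ge> 0"
  shows "y' \<in> S" and "\<And>ys. ys \<in> L \<Longrightarrow> Py ys \<le> Py y'"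
proof -
  show "y' \<in> S"
  proof (rule ccontr)
    assume "y' \<notin> S"
    with current \<open>Py y0 = 0\<close> have "Py y' = 0" by simp
    with max have "sum Py S \<le> 0" by (simp add: sum_nonpos)
    with exact \<open>Py y' = 0\<close> show False by simp
  qed
  fix ys assume ys: "ys \<in> L"
  show "Py ys \<le> Py y'"
  proof (cases "ys \<in> S")
    case True then show ?thesis by (rule max)
  next
    case False
    have "Py ys + sum Py S = sum Py (insert ys S)" using False \<open>finite S\<close> by simp
    also have "\<dots> \<le> 1" using mass \<open>finite S\<close> \<open>S \<subseteq> L\<close> ys by simp
    finally show ?thesis using exact by simp
  qed
qed

theorem theorem2:
  fixes Y :: "'y set" and H :: "'y \<Rightarrow> 'h set" and m :: nat
    and P :: "'h list \<Rightarrow> real" and r :: "nat \<Rightarrow> 'h list" and y0 :: "'y list" and n :: nat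
  assumes finY: "finite Y"
    and finH: "\<And>y. y \<in> Y \<Longrightarrow> finite (H y)"
    and disj: "\<And>y z. y \<in> Y \<Longrightarrow> z \<in> Y \<Longrightarrow> y \<noteq> z \<Longrightarrow> H y \<inter> H z = {}"
    and Pnonneg: "\<And>hs. hs \<in> latent_labelings Y H m \<Longrightarrow> P hs \<ge> 0"
    and Psum: "(\<Sum>hs \<in> latent_labelings Y H m. P hs) = 1"
    and rank_bij: "bij_betw r {1..card (latent_labelings Y H m)} (latent_labelings Y H m)"
    and rank_dec: "\<And>i j. 1 \<le> i \<Longrightarrow> i \<le> j \<Longrightarrow> j \<le> card (latent_labelings Y H m)
                    \<Longrightarrow> P (r j) \<le> P (r i)"
    and init: "label_prob Y H m P y0 = 0"
    and n_range: "1 \<le> n" "n \<le> card (latent_labelings Y H m)"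
    and exact: "label_prob Y H m P (snd (ldi_state (label_prob Y H m P) (parent Y H m) r y0 n))
                - (1 - (\<Sum>yk \<in> fst (ldi_state (label_prob Y H m P) (parent Y H m) r y0 n).
                          label_prob Y H m P yk)) \<ge> 0"
  shows "snd (ldi_state (label_prob Y H m P) (parent Y H m) r y0 n) \<in> labelings Y m
       \<and> (\<forall>ys \<in> labelings Y m.
            label_prob Y H m P ys \<le> label_prob Y H m P (snd (ldi_state (label_prob Y H m P) (parent Y H m) r y0 n)))"
proof -
  let ?state = "ldi_state (label_prob Y H m P) (parent Y H m) r y0 n"
  have visited: "fst ?state \<subseteq> labelings Y m"
  proof (rule ldi_state_subset)
    fix i assume "1 \<le> i" "i \<le> n"
    with n_range rank_bij have "r i \<in> latent_labelings Y H m" by (auto simp: bij_betw_def)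
    then show "parent Y H m (r i) \<in> labelings Y m" using disj by (blast intro: parent_in_labelings)
  qed
  have mass: "sum (label_prob Y H m P) T \<le> 1" if "finite T" "T \<subseteq> labelings Y m" for T
  proof -
    have "sum (label_prob Y H m P) T \<le> (\<Sum>hs \<in> latent_labelings Y H m. P hs)"
      by (rule sum_label_prob_le) (use finY finH disj Pnonneg that in auto)
    with Psum show ?thesis by simp
  qed
  have nonneg: "label_prob Y H m P ys \<ge> 0" for ys
    by (rule label_prob_nonneg) (use Pnonneg in auto)
  note argmax = exact_condition_imp_argmax[OF ldi_state_finite visited ldi_state_current
      ldi_state_max init nonneg mass exact]
  show ?thesis using argmax visited by blast
qed

end
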